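(* For every even integer $k\ge 4$, the graph $M_{\rm III}(k)$ is not word-representable.
   Context: For even $k\ge4$, $M_{\rm III}(k)$ is the split graph with clique $C=\{c_1,\dots,c_{k+1}\}$ and independent set $I=\{b,a_1,\dots,a_{k-1}\}$, where $N(b)=\{c_2,\dots,c_{k-1},c_{k+1}\}$ and $N(a_i)=\{c_i,c_{i+1}\}$ for $1\le i\le k-1$. A graph $G=(V,E)$ is word-representable if there is a word $w$ over $V$ such that for all distinct $a,b\in V$, $ab\in E$ iff $a$ and $b$ alternate in $w$ (i.e. the subsequence of $w$ formed by all occurrences of $a$ and $b$ is $abab\cdots$ or $baba\cdots$). *)

theory Defs
  imports Main
begin

definition alternate :: "'a list \<Rightarrow> 'a \<Rightarrow> 'a \<Rightarrow> bool" where
  "alternate w x y \<longleftrightarrow>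
     (let u = filter (\<lambda>z. z = x \<or> z = y) w in
        \<forall>i. Suc i < length u \<longrightarrow> u ! i \<noteq> u ! Suc i)"

(* Graph on vertex set V with (symmetric) adjacency relation E.
   w is a word over V (every vertex of V occurs in w, standard convention). *)
definition word_represents :: "'a set \<Rightarrow> ('a \<Rightarrow> 'a \<Rightarrow> bool) \<Rightarrow> 'a list \<Rightarrow> bool" where
  "word_represents V E w \<longleftrightarrow> set w = V \<and>
     (\<forall>a\<in>V. \<forall>b\<in>V. a \<noteq> b \<longrightarrow> (E a b \<longleftrightarrow> alternate w a b))"

definition word_representable :: "'a set \<Rightarrow> ('a \<Rightarrow> 'a \<Rightarrow> bool) \<Rightarrow> bool" where
  "word_representable V E \<longleftrightarrow> (\<exists>w. word_represents V E w)"

(* Vertices of M_III(k): clique vertices c_1..c_{k+1}, b, and a_1..a_{k-1}. *)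
datatype vtx = C nat | B | A nat

definition M3_V :: "nat \<Rightarrow> vtx set" where
  "M3_V k = C ` {1..k+1} \<union> {B} \<union> A ` {1..k-1}"

definition M3_Nb :: "nat \<Rightarrow> nat set" where
  "M3_Nb k = {2..k-1} \<union> {k+1}"

fun M3_adj0 :: "nat \<Rightarrow> vtx \<Rightarrow> vtx \<Rightarrow> bool" where
  "M3_adj0 k (C i) (C j) = (i \<noteq> j)"
| "M3_adj0 k B (C j) = (j \<in> M3_Nb k)"
| "M3_adj0 k (A i) (C j) = (j = i \<or> j = i + 1)"
| "M3_adj0 k _ _ = False"

definition M3_E :: "nat \<Rightarrow> vtx \<Rightarrow> vtx \<Rightarrow> bool" where
  "M3_E k u v \<longleftrightarrow> u \<in> M3_V k \<and> v \<in> M3_V k \<and> (M3_adj0 k u v \<or> M3_adj0 k v u)"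

end

theory Submission
  imports Defs "HOL-Number_Theory.Cong"
begin

(* Say that x leads y in w if every prefix of w contains as many x as y, or one more; two
   distinct letters alternate iff one leads the other.  Comparing prefix counts shows that
   leading is transitive on a clique, so the clique c_1, ..., c_{k+1} is linearly ordered.  No
   vertex outside the clique can alternate with the first and third of four clique vertices in
   this order but not with the second and fourth, or vice versa.  For a_i this makes c_i and
   c_{i+1} neighbours in the cyclic order of the clique, so c_1, ..., c_k run around that cycle
   in one direction and c_1, c_k are at cyclic distance 2.  Since the forbidden pattern is
   unchanged by complementing the neighbourhood, b, whose non-neighbours in the clique are
   exactly c_1 and c_k, makes them cyclic neighbours. *)

definition leads :: "'a list \<Rightarrow> 'a \<Rightarrow> 'a \<Rightarrow> bool" where
  "leads w x y \<longleftrightarrow> (\<forall>n. count_list (take n w) y \<le> count_list (take n w) x \<and>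
                          count_list (take n w) x \<le> Suc (count_list (take n w) y))"

lemma leads_Nil [simp]: "leads [] x y"
  by (simp add: leads_def)

lemma leads_Cons:
  assumes "x \<noteq> y"
  shows "leads (a # u) x y \<longleftrightarrow> (if a = x then leads u y x else a \<noteq> y \<and> leads u x y)"
proof -
  have "leads (a # u) x y \<longleftrightarrow> (\<forall>n. count_list (a # take n u) y \<le> count_list (a # take n u) x \<and>
                          count_list (a # take n u) x \<le> Suc (count_list (a # take n u) y))"
    unfolding leads_def
    by (metis take_0 take_Suc_Cons count_list.simps(1) le_refl le_SucI not0_implies_Suc)
  also have "\<dots> \<longleftrightarrow> (if a = x then leads u y x else a \<noteq> y \<and> leads u x y)"
    using assms by (cases "a = x"; cases "a = y") (auto simp: leads_def intro: exI[of _ 0])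
  finally show ?thesis .
qed

lemma leads_filter:
  assumes "P x" "P y" "x \<noteq> y"
  shows "leads (filter P w) x y \<longleftrightarrow> leads w x y"
  using assms by (induction w arbitrary: x y) (auto simp: leads_Cons)

lemma distinct_adj_iff_leads:
  assumes "set u \<subseteq> {x, y}" "x \<noteq> y"
  shows "distinct_adj u \<longleftrightarrow> leads u x y \<or> leads u y x"
  using assms
proof (induction u)
  case (Cons a u)
  then have IH: "distinct_adj u \<longleftrightarrow> leads u x y \<or> leads u y x" by simp
  show ?case
  proof (cases u)
    case (Cons b v)
    with IH \<open>x \<noteq> y\<close> \<open>set (a # u) \<subseteq> {x, y}\<close> show ?thesis by (auto simp: leads_Cons)
  qed (use Cons.prems in \<open>auto simp: leads_Cons\<close>)
qed simp

lemma alternate_iff_leads: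
  assumes "x \<noteq> y"
  shows "alternate w x y \<longleftrightarrow> leads w x y \<or> leads w y x"
proof -
  let ?u = "filter (\<lambda>z. z = x \<or> z = y) w"
  have "alternate w x y \<longleftrightarrow> distinct_adj ?u"
    by (simp add: alternate_def Let_def distinct_adj_conv_nth)
  also have "\<dots> \<longleftrightarrow> leads ?u x y \<or> leads ?u y x"
    using assms by (intro distinct_adj_iff_leads) auto
  also have "\<dots> \<longleftrightarrow> leads w x y \<or> leads w y x"
    using assms by (simp add: leads_filter)
  finally show ?thesis .
qed

lemma leads_antisym:
  assumes "x \<in> set w" "leads w x y" "leads w y x"
  shows "x = y"
proof (rule ccontr)
  assume "x \<noteq> y"
  with assms show False by (induction w) (auto simp: leads_Cons split: if_splits)
qed

lemma leads_trans:
  assumes "leads w x y" "leads w y z" "leads w x z \<or> leads w z x"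
  shows "leads w x z"
  using assms unfolding leads_def by (meson le_trans order.trans)

text \<open>If \<open>a, b, c, d\<close> lead each other in this order and \<open>a\<close> leads \<open>d\<close>, their counts in any
  prefix are \<open>m + 1, \<dots>, m + 1, m, \<dots>, m\<close>.\<close>

lemma alternate_chain_first_third:
  assumes chain: "leads w a b" "leads w b c" "leads w c d" "leads w a d"
    and v: "v \<in> set w" "v \<notin> {a, b, c, d}"
    and ac: "alternate w v a" "alternate w v c"
  shows "alternate w v b \<or> alternate w v d"
proof -
  have alt: "alternate w v x \<longleftrightarrow> leads w v x \<or> leads w x v" if "x \<in> {a, b, c, d}" for x
    using v(2) that by (intro alternate_iff_leads) auto
  consider "leads w v a" "leads w v c" | "leads w v a" "leads w c v"
    | "leads w a v" "leads w v c" | "leads w a v" "leads w c v"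
    using ac alt[of a] alt[of c] by blast
  then show ?thesis
  proof cases
    case 1
    then have "leads w v b" using chain unfolding leads_def by (meson Suc_le_mono order.trans)
    then show ?thesis by (simp add: alt)
  next
    case 2
    then have "leads w a v" using chain unfolding leads_def by (meson Suc_le_mono order.trans)
    with 2 have "v = a" using leads_antisym[OF v(1)] by blast
    with v(2) show ?thesis by simp
  next
    case 3
    then have "leads w v d" using chain unfolding leads_def by (meson Suc_le_mono order.trans)
    then show ?thesis by (simp add: alt)
  next
    case 4
    then have "leads w b v" using chain unfolding leads_def by (meson Suc_le_mono order.trans)
    then show ?thesis by (simp add: alt)
  qed
qed

lemma alternate_chain_second_fourth:
  assumes chain: "leads w a b" "leads w b c" "leads w c d" "leads w a d"
    and v: "v \<in> set w" "v \<notin> {a, b, c, d}"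
    and bd: "alternate w v b" "alternate w v d"
  shows "alternate w v a \<or> alternate w v c"
proof -
  have alt: "alternate w v x \<longleftrightarrow> leads w v x \<or> leads w x v" if "x \<in> {a, b, c, d}" for x
    using v(2) that by (intro alternate_iff_leads) auto
  consider "leads w v b" "leads w v d" | "leads w v b" "leads w d v"
    | "leads w b v" "leads w v d" | "leads w b v" "leads w d v"
    using bd alt[of b] alt[of d] by blast
  then show ?thesis
  proof cases
    case 1
    then have "leads w v c" using chain unfolding leads_def by (meson Suc_le_mono order.trans)
    then show ?thesis by (simp add: alt)
  next
    case 2
    then have "leads w b v" using chain unfolding leads_def by (meson Suc_le_mono order.trans)
    with 2 have "v = b" using leads_antisym[OF v(1)] by blast
    with v(2) show ?thesis by simp
  next
    case 3
    then have "leads w a v" using chain unfolding leads_def by (meson Suc_le_mono order.trans)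
    then show ?thesis by (simp add: alt)
  next
    case 4
    then have "leads w c v" using chain unfolding leads_def by (meson Suc_le_mono order.trans)
    then show ?thesis by (simp add: alt)
  qed
qed

definition lead_rank :: "'a list \<Rightarrow> 'a set \<Rightarrow> 'a \<Rightarrow> nat" where
  "lead_rank w S x = card {z \<in> S. z \<noteq> x \<and> leads w z x}"

lemma lead_rank_less:
  assumes S: "S \<subseteq> set w" "\<forall>x\<in>S. \<forall>y\<in>S. x \<noteq> y \<longrightarrow> alternate w x y"
    and xy: "x \<in> S" "y \<in> S" "x \<noteq> y" "leads w x y"
  shows "lead_rank w S x < lead_rank w S y"
proof -
  have "{z \<in> S. z \<noteq> x \<and> leads w z x} \<subseteq> {z \<in> S. z \<noteq> y \<and> leads w z y}"
  proof
    fix z assume "z \<in> {z \<in> S. z \<noteq> x \<and> leads w z x}"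
    then have z: "z \<in> S" "z \<noteq> x" "leads w z x" by auto
    have "z \<noteq> y" using leads_antisym[of x w y] xy z S(1) by auto
    moreover have "leads w z y"
    proof (rule leads_trans[OF z(3) xy(4)])
      show "leads w z y \<or> leads w y z"
        using S(2) z(1) xy(2) \<open>z \<noteq> y\<close> alternate_iff_leads[OF \<open>z \<noteq> y\<close>] by blast
    qed
    ultimately show "z \<in> {z \<in> S. z \<noteq> y \<and> leads w z y}" using z(1) by simp
  qed
  moreover have "x \<in> {z \<in> S. z \<noteq> y \<and> leads w z y} - {z \<in> S. z \<noteq> x \<and> leads w z x}"
    using xy by simp
  moreover have "finite S" using S(1) finite_subset by blast
  ultimately show ?thesis unfolding lead_rank_def by (intro psubset_card_mono) auto
qed

lemma lead_rank_less_iff: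
  assumes S: "S \<subseteq> set w" "\<forall>x\<in>S. \<forall>y\<in>S. x \<noteq> y \<longrightarrow> alternate w x y"
    and "x \<in> S" "y \<in> S" "x \<noteq> y"
  shows "lead_rank w S x < lead_rank w S y \<longleftrightarrow> leads w x y"
proof
  assume less: "lead_rank w S x < lead_rank w S y"
  show "leads w x y"
  proof (rule ccontr)
    assume "\<not> leads w x y"
    then have "leads w y x" using S(2) assms(3-5) alternate_iff_leads[OF assms(5)] by blast
    then have "lead_rank w S y < lead_rank w S x" using lead_rank_less[OF S assms(4,3)] assms(5) by simp
    with less show False by simp
  qed
qed (rule lead_rank_less[OF S assms(3-5)])

lemma bij_betw_lead_rank:
  assumes S: "S \<subseteq> set w" "\<forall>x\<in>S. \<forall>y\<in>S. x \<noteq> y \<longrightarrow> alternate w x y"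
  shows "bij_betw (lead_rank w S) S {..<card S}"
proof -
  have fin: "finite S" using S(1) finite_subset by blast
  have inj: "inj_on (lead_rank w S) S"
  proof (rule inj_onI, rule ccontr)
    fix x y assume xy: "x \<in> S" "y \<in> S" "lead_rank w S x = lead_rank w S y" "x \<noteq> y"
    then have "leads w x y \<or> leads w y x" using S(2) alternate_iff_leads[OF xy(4)] by blast
    then show False using lead_rank_less_iff[OF S] xy by fastforce
  qed
  have "lead_rank w S ` S \<subseteq> {..<card S}"
  proof
    fix r assume "r \<in> lead_rank w S ` S"
    then obtain x where x: "x \<in> S" "r = lead_rank w S x" by blast
    have "lead_rank w S x \<le> card (S - {x})"
      unfolding lead_rank_def using fin by (intro card_mono) auto
    also have "\<dots> < card S" using fin x(1) by (rule card_Diff1_less)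
    finally show "r \<in> {..<card S}" using x(2) by simp
  qed
  then have "lead_rank w S ` S = {..<card S}"
    using inj by (intro card_subset_eq) (auto simp: card_image)
  with inj show ?thesis by (simp add: bij_betw_def)
qed

definition alternating_quadruple :: "('a \<Rightarrow> nat) \<Rightarrow> 'a set \<Rightarrow> 'a set \<Rightarrow> bool" where
  "alternating_quadruple r S N \<longleftrightarrow>
     (\<exists>x1\<in>S. \<exists>x2\<in>S. \<exists>x3\<in>S. \<exists>x4\<in>S. r x1 < r x2 \<and> r x2 < r x3 \<and> r x3 < r x4 \<and>
        (x1 \<in> N \<longleftrightarrow> x3 \<in> N) \<and> (x2 \<in> N \<longleftrightarrow> x4 \<in> N) \<and> (x1 \<in> N \<longleftrightarrow> x2 \<notin> N))"

lemma alternating_quadruple_Diff: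
  "alternating_quadruple r I (I - N) \<longleftrightarrow> alternating_quadruple r I N"
  unfolding alternating_quadruple_def by auto

lemma alternating_quadruple_image:
  assumes "inj_on g I" "N \<subseteq> I"
  shows "alternating_quadruple r (g ` I) (g ` N) \<longleftrightarrow> alternating_quadruple (r \<circ> g) I N"
  using assms unfolding alternating_quadruple_def by (auto simp: inj_on_image_mem_iff)

lemma no_alternating_quadruple_lead_rank:
  assumes S: "S \<subseteq> set w" "\<forall>x\<in>S. \<forall>y\<in>S. x \<noteq> y \<longrightarrow> alternate w x y"
    and v: "v \<in> set w" "v \<notin> S"
  shows "\<not> alternating_quadruple (lead_rank w S) S {x \<in> S. alternate w v x}"
proof
  assume "alternating_quadruple (lead_rank w S) S {x \<in> S. alternate w v x}"
  then obtain a b c d where abcd: "a \<in> S" "b \<in> S" "c \<in> S" "d \<in> S"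
    and ranks: "lead_rank w S a < lead_rank w S b" "lead_rank w S b < lead_rank w S c"
      "lead_rank w S c < lead_rank w S d"
    and pattern: "alternate w v a \<longleftrightarrow> alternate w v c" "alternate w v b \<longleftrightarrow> alternate w v d"
      "alternate w v a \<longleftrightarrow> \<not> alternate w v b"
    unfolding alternating_quadruple_def by blast
  have ad: "lead_rank w S a < lead_rank w S d" using ranks by linarith
  then have "a \<noteq> b" "b \<noteq> c" "c \<noteq> d" "a \<noteq> d" using ranks by auto
  with ranks ad abcd have chain: "leads w a b" "leads w b c" "leads w c d" "leads w a d"
    by (simp_all add: lead_rank_less_iff[OF S])
  have v': "v \<notin> {a, b, c, d}" using v abcd by auto
  show False
  proof (cases "alternate w v a")
    case True
    then show False using alternate_chain_first_third[OF chain v(1) v'] pattern by simp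
  next
    case False
    then show False using alternate_chain_second_fourth[OF chain v(1) v'] pattern by simp
  qed
qed

lemma word_represents_clique:
  assumes w: "word_represents V E w" and S: "S \<subseteq> V" "\<forall>x\<in>S. \<forall>y\<in>S. x \<noteq> y \<longrightarrow> E x y"
  shows "bij_betw (lead_rank w S) S {..<card S}"
    and "v \<in> V - S \<Longrightarrow> \<not> alternating_quadruple (lead_rank w S) S {x \<in> S. E v x}"
proof -
  have V: "set w = V" and E: "\<And>x y. x \<in> V \<Longrightarrow> y \<in> V \<Longrightarrow> x \<noteq> y \<Longrightarrow> E x y \<longleftrightarrow> alternate w x y"
    using w by (auto simp: word_represents_def)
  have clique: "S \<subseteq> set w" "\<forall>x\<in>S. \<forall>y\<in>S. x \<noteq> y \<longrightarrow> alternate w x y"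
    using S V E[OF subsetD[OF S(1)] subsetD[OF S(1)]] by auto
  show "bij_betw (lead_rank w S) S {..<card S}"
    by (rule bij_betw_lead_rank[OF clique])
  show "\<not> alternating_quadruple (lead_rank w S) S {x \<in> S. E v x}" if v: "v \<in> V - S"
  proof -
    have "{x \<in> S. E v x} = {x \<in> S. alternate w v x}"
      using E[of v] v S(1) by auto
    then show ?thesis using no_alternating_quadruple_lead_rank[OF clique] v V by auto
  qed
qed

definition cyclic_neighbours :: "nat \<Rightarrow> nat \<Rightarrow> nat \<Rightarrow> bool" where
  "cyclic_neighbours n p q \<longleftrightarrow> (\<exists>s\<in>{1, -1}. [int p + s = int q] (mod int n))"

lemma cyclic_neighbours_sym:
  assumes "cyclic_neighbours n p q"
  shows "cyclic_neighbours n q p"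
proof -
  obtain s where s: "s \<in> {1, -1}" "[int p + s = int q] (mod int n)"
    using assms unfolding cyclic_neighbours_def by blast
  have "[int q + - s = int p + s + - s] (mod int n)"
    using cong_add[OF cong_sym[OF s(2)] cong_refl] .
  then have "[int q + - s = int p] (mod int n)" by simp
  with s(1) show ?thesis unfolding cyclic_neighbours_def by auto
qed

lemma cyclic_neighbours_if_no_alternating_quadruple_less:
  assumes f: "bij_betw f I {..<n}" and ij: "i \<in> I" "j \<in> I" "f i < f j"
    and no_quad: "\<not> alternating_quadruple f I {i, j}"
  shows "cyclic_neighbours n (f i) (f j)"
proof (rule ccontr)
  assume not_neighbours: "\<not> cyclic_neighbours n (f i) (f j)"
  have img: "f ` I = {..<n}" using f by (rule bij_betw_imp_surj_on)
  have attained: "\<exists>z\<in>I. f z = p" if "p < n" for p using img that by (metis imageE lessThan_iff)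
  have "f j < n" using img ij(2) by auto
  have "f j \<noteq> Suc (f i)"
    using not_neighbours unfolding cyclic_neighbours_def by (auto simp: ac_simps)
  with ij(3) have gap: "Suc (f i) < f j" by linarith
  with \<open>f j < n\<close> have "Suc (f i) < n" by linarith
  then obtain z where z: "z \<in> I" "f z = Suc (f i)" using attained by blast
  have "alternating_quadruple f I {i, j}"
  proof (cases "f i = 0")
    case False
    have "f i - 1 < n" using \<open>f j < n\<close> ij(3) by linarith
    then obtain z' where z': "z' \<in> I" "f z' = f i - 1" using attained by blast
    show ?thesis unfolding alternating_quadruple_def
      by (rule bexI[of _ z'], rule bexI[of _ i], rule bexI[of _ z], rule bexI[of _ j])
        (use False gap z z' ij in auto)
  next
    case True
    have "f j \<noteq> n - 1"
    proof
      assume "f j = n - 1"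
      then have "[int (f i) + -1 = int (f j)] (mod int n)"
        using True \<open>f j < n\<close> by (simp add: cong_iff_dvd_diff of_nat_diff)
      with not_neighbours show False unfolding cyclic_neighbours_def by auto
    qed
    with \<open>f j < n\<close> have "Suc (f j) < n" by linarith
    then obtain z' where z': "z' \<in> I" "f z' = Suc (f j)" using attained by blast
    show ?thesis unfolding alternating_quadruple_def
      by (rule bexI[of _ i], rule bexI[of _ z], rule bexI[of _ j], rule bexI[of _ z'])
        (use True gap z z' ij in auto)
  qed
  with no_quad show False ..
qed

lemma cyclic_neighbours_if_no_alternating_quadruple:
  assumes f: "bij_betw f I {..<n}" and ij: "i \<in> I" "j \<in> I" "i \<noteq> j"
    and no_quad: "\<not> alternating_quadruple f I {i, j}"
  shows "cyclic_neighbours n (f i) (f j)"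
proof -
  have "f i \<noteq> f j" using bij_betw_imp_inj_on[OF f] ij by (meson inj_on_eq_iff)
  then consider "f i < f j" | "f j < f i" by linarith
  then show ?thesis
  proof cases
    case 1
    with f ij(1,2) show ?thesis by (rule cyclic_neighbours_if_no_alternating_quadruple_less[OF _ _ _ _ no_quad])
  next
    case 2
    with f ij no_quad have "cyclic_neighbours n (f j) (f i)"
      by (intro cyclic_neighbours_if_no_alternating_quadruple_less) (auto simp: insert_commute)
    then show ?thesis by (rule cyclic_neighbours_sym)
  qed
qed

lemma cyclic_step_same_direction:
  fixes p q r s t n :: int
  assumes "[p + s = q] (mod n)" "[q + t = r] (mod n)" "s \<in> {1, -1}" "t \<in> {1, -1}"
    and "0 \<le> p" "p < n" "0 \<le> r" "r < n" "p \<noteq> r"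
  shows "t = s"
proof (rule ccontr)
  assume "t \<noteq> s"
  with assms(3,4) have "s + t = 0" by auto
  have "[p + s + t = q + t] (mod n)" using cong_add[OF assms(1) cong_refl] .
  with \<open>s + t = 0\<close> have "[p = q + t] (mod n)" by (simp add: add.assoc)
  then have "[p = r] (mod n)" using assms(2) by (rule cong_trans)
  with assms(5-8) have "p = r" by (rule cong_less_imp_eq_int)
  with assms(9) show False ..
qed

lemma cyclic_walk:
  assumes inj: "inj_on f {a..b}" and bounded: "f ` {a..b} \<subseteq> {..<n}" and "a < b"
    and steps: "\<And>i. a \<le> i \<Longrightarrow> i < b \<Longrightarrow> cyclic_neighbours n (f i) (f (Suc i))"
  shows "\<exists>s\<in>{1, -1}. \<forall>i\<in>{a..b}. [int (f a) + s * (int i - int a) = int (f i)] (mod int n)"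
proof -
  obtain s where s: "s \<in> {1, -1}" "[int (f a) + s = int (f (Suc a))] (mod int n)"
    using steps[of a] \<open>a < b\<close> unfolding cyclic_neighbours_def by blast
  have forward: "[int (f i) + s = int (f (Suc i))] (mod int n)" if "a \<le> i" "i < b" for i
    using that(1)
  proof (induction i rule: dec_induct)
    case (step m)
    have "cyclic_neighbours n (f (Suc m)) (f (Suc (Suc m)))"
      using step.hyps that(2) by (intro steps) auto
    then obtain t where t: "t \<in> {1, -1}" "[int (f (Suc m)) + t = int (f (Suc (Suc m)))] (mod int n)"
      unfolding cyclic_neighbours_def by blast
    have "f m \<noteq> f (Suc (Suc m))" using inj step.hyps that(2) by (auto simp: inj_on_eq_iff)
    moreover have "f m < n" "f (Suc (Suc m)) < n"
      using bounded step.hyps that(2) by (auto simp: image_subset_iff)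
    ultimately have "t = s" using cyclic_step_same_direction[OF step.IH t(2) s(1) t(1)] by simp
    with t show ?case by simp
  qed (use s in simp)
  have "[int (f a) + s * (int i - int a) = int (f i)] (mod int n)" if "a \<le> i" "i \<le> b" for i
    using that(1)
  proof (induction i rule: dec_induct)
    case (step m)
    have "[int (f a) + s * (int m - int a) + s = int (f m) + s] (mod int n)"
      using step.IH by (rule cong_add) simp
    also have "[int (f m) + s = int (f (Suc m))] (mod int n)"
      using step.hyps that(2) by (intro forward) auto
    finally show ?case by (simp add: algebra_simps)
  qed simp
  with s(1) show ?thesis by auto
qed

lemma alternating_quadruple_path_ends:
  assumes k: "4 \<le> k" and f: "bij_betw f {1..k+1} {..<k+1}"
    and path: "\<And>i. i \<in> {1..<k} \<Longrightarrow> \<not> alternating_quadruple f {1..k+1} {i, Suc i}"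
  shows "alternating_quadruple f {1..k+1} {1, k}"
proof (rule ccontr)
  assume no_quad: "\<not> alternating_quadruple f {1..k+1} {1, k}"
  have "1 \<in> {1..k+1}" "k \<in> {1..k+1}" "1 \<noteq> k" using k by auto
  from cyclic_neighbours_if_no_alternating_quadruple[OF f this no_quad]
  obtain t where t: "t \<in> {1, -1}" "[int (f 1) + t = int (f k)] (mod int (k + 1))"
    unfolding cyclic_neighbours_def by blast
  have inj: "inj_on f {1..k}"
    using bij_betw_imp_inj_on[OF f] by (rule inj_on_subset) simp
  have "f ` {1..k} \<subseteq> f ` {1..k+1}" by (rule image_mono) simp
  then have bounded: "f ` {1..k} \<subseteq> {..<k+1}" using bij_betw_imp_surj_on[OF f] by simp
  have steps: "cyclic_neighbours (k + 1) (f i) (f (Suc i))" if "1 \<le> i" "i < k" for i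
  proof (rule cyclic_neighbours_if_no_alternating_quadruple[OF f])
    show "i \<in> {1..k+1}" "Suc i \<in> {1..k+1}" "i \<noteq> Suc i" using that by auto
    show "\<not> alternating_quadruple f {1..k+1} {i, Suc i}" using that by (intro path) simp
  qed
  have "1 < k" using k by simp
  from cyclic_walk[of f 1 k "k + 1", OF inj bounded this steps] obtain s where s: "s \<in> {1, -1}"
    "\<forall>i\<in>{1..k}. [int (f 1) + s * (int i - int 1) = int (f i)] (mod int (k + 1))" ..
  have "[int (f 1) + s * (int k - 1) = int (f k)] (mod int (k + 1))" using s(2) \<open>1 < k\<close> by simp
  with t(2) have "[int (f 1) + t = int (f 1) + s * (int k - 1)] (mod int (k + 1))"
    by (meson cong_sym cong_trans)
  then have "int (k + 1) dvd t - s * (int k - 1)" by (simp add: cong_iff_dvd_diff)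
  then have "int (k + 1) dvd t - s * (int k - 1) + s * int (k + 1)" by simp
  also have "t - s * (int k - 1) + s * int (k + 1) = t + 2 * s" by (simp add: algebra_simps)
  finally have "int (k + 1) dvd t + 2 * s" .
  moreover have "t + 2 * s \<noteq> 0" using s(1) t(1) by auto
  ultimately have "\<bar>int (k + 1)\<bar> \<le> \<bar>t + 2 * s\<bar>" by (intro dvd_imp_le_int)
  also have "\<bar>t + 2 * s\<bar> \<le> 3" using s(1) t(1) by auto
  finally show False using k by simp
qed

lemma M3_clique:
  "C ` {1..k+1} \<subseteq> M3_V k"
  "\<forall>x\<in>C ` {1..k+1}. \<forall>y\<in>C ` {1..k+1}. x \<noteq> y \<longrightarrow> M3_E k x y"
  by (auto simp: M3_V_def M3_E_def)

lemma M3_A_clique_neighbours: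
  assumes "i \<in> {1..<k}"
  shows "A i \<in> M3_V k - C ` {1..k+1}"
    and "{x \<in> C ` {1..k+1}. M3_E k (A i) x} = C ` {i, Suc i}"
  using assms by (auto simp: M3_V_def M3_E_def)

lemma M3_B_clique_neighbours:
  assumes "2 \<le> k"
  shows "B \<in> M3_V k - C ` {1..k+1}"
    and "{x \<in> C ` {1..k+1}. M3_E k B x} = C ` ({1..k+1} - {1, k})"
  using assms by (auto simp: M3_V_def M3_E_def M3_Nb_def)

theorem lemma11:
  fixes k :: nat
  assumes "even k" and "k \<ge> 4"
  shows "\<not> word_representable (M3_V k) (M3_E k)"
proof
  assume "word_representable (M3_V k) (M3_E k)"
  then obtain w where w: "word_represents (M3_V k) (M3_E k) w"
    unfolding word_representable_def ..
  let ?I = "{1..k+1}"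
  let ?r = "lead_rank w (C ` ?I)"
  note clique = word_represents_clique[OF w M3_clique]
  have inj_C: "inj_on C ?I" by (simp add: inj_on_def)
  have "bij_betw (?r \<circ> C) ?I {..<k+1}"
    using bij_betw_trans[OF inj_on_imp_bij_betw[OF inj_C] clique(1)] inj_C by (simp add: card_image)
  moreover have "\<not> alternating_quadruple (?r \<circ> C) ?I {i, Suc i}" if "i \<in> {1..<k}" for i
    using clique(2)[OF M3_A_clique_neighbours(1)[OF that]] M3_A_clique_neighbours(2)[OF that]
      alternating_quadruple_image[OF inj_C, of "{i, Suc i}"] that by auto
  moreover have "\<not> alternating_quadruple (?r \<circ> C) ?I (?I - {1, k})"
    using clique(2)[OF M3_B_clique_neighbours(1)] M3_B_clique_neighbours(2) \<open>k \<ge> 4\<close>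
      alternating_quadruple_image[OF inj_C, of "?I - {1, k}"] by auto
  then have "\<not> alternating_quadruple (?r \<circ> C) ?I {1, k}"
    by (simp add: alternating_quadruple_Diff)
  ultimately show False using alternating_quadruple_path_ends \<open>k \<ge> 4\<close> by blast
qed

end
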